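(* Let $\kappa<\Gamma$ be infinite cardinals. Then the Banach space $X^{\kappa,\Gamma}$ fails the ball fixed point property.
   Context: Cardinals are identified with initial ordinals, and an ordinal is the set of smaller ordinals. $\ell_\infty(\Gamma)$ is the Banach space of bounded functions $f\colon\Gamma\to\mathbb{R}$ with $\|f\|_\infty=\sup_{\gamma\in\Gamma}|f(\gamma)|$. $[\Gamma]^\kappa$ is the family of subsets of $\Gamma$ of cardinality $\kappa$. Define $X^{\kappa,\Gamma}=\{f\in\ell_\infty(\Gamma):\exists A\in[\Gamma]^\kappa \text{ such that } f|_{\Gamma\setminus A}\text{ is constant}\}$, a closed linear subspace of $\ell_\infty(\Gamma)$ with the sup norm. A real Banach space $X$ has the ball fixed point property (BFPP) if every nonexpansive map $T\colon B_X\to B_X$ (i.e. $\|Tx-Ty\|\le\|x-y\|$) has a fixed point, where $B_X$ is the closed unit ball. *)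

theory Defs
  imports "HOL-Analysis.Analysis" "HOL-Library.Equipollence"
begin

text \<open>Gamma is modelled as the universe of a type 'a; elements of l_infty(Gamma)
  are bounded functions 'a => real with the sup norm.\<close>

definition linfty :: "('a \<Rightarrow> real) set" where
  "linfty = {f. bounded (range f)}"

definition supnorm :: "('a \<Rightarrow> real) \<Rightarrow> real" where
  "supnorm f = (SUP x. \<bar>f x\<bar>)"

text \<open>X^{kappa,Gamma}: the cardinal kappa is represented by a set K; A ranges over
  subsets of Gamma equipollent to K (i.e. of cardinality kappa).\<close>
definition Xspace :: "'b set \<Rightarrow> ('a \<Rightarrow> real) set" where
  "Xspace K = {f \<in> linfty. \<exists>A :: 'a set. A \<approx> K \<and> (\<exists>c. \<forall>x \<in> - A. f x = c)}"

definition unit_ball :: "('a \<Rightarrow> real) set \<Rightarrow> ('a \<Rightarrow> real) set" where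
  "unit_ball V = {f \<in> V. supnorm f \<le> 1}"

definition nonexpansive_on :: "('a \<Rightarrow> real) set \<Rightarrow> (('a \<Rightarrow> real) \<Rightarrow> ('a \<Rightarrow> real)) \<Rightarrow> bool" where
  "nonexpansive_on S T \<longleftrightarrow> (\<forall>f\<in>S. \<forall>g\<in>S. supnorm (T f - T g) \<le> supnorm (f - g))"

definition ball_fpp :: "('a \<Rightarrow> real) set \<Rightarrow> bool" where
  "ball_fpp V \<longleftrightarrow> (\<forall>T. T ` unit_ball V \<subseteq> unit_ball V \<and> nonexpansive_on (unit_ball V) T
      \<longrightarrow> (\<exists>f \<in> unit_ball V. T f = f))"

end

theory Submission
  imports Defs
begin

text \<open>
  Well-order \<Gamma> and let W be the initial segment of the points with at most \<kappa> predecessors.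
  It has order type the successor cardinal of \<kappa>, so every subset of W of size \<kappa> is bounded in W.
  On the unit ball let T f be 1 at the least point, minus the left limsup of f at the other points
  of W, and - f off W. Lim sups of bounded functions are 1-Lipschitz for the sup norm, so T is
  nonexpansive. If f is constant c off a set A of size \<kappa>, then A \<inter> W lies below some point of W,
  so T f is constant - c off a set of size \<kappa> and T maps the ball into itself. A fixed point f
  would satisfy \<bar>f\<bar> = 1 on W by transfinite induction, yet equal both c and - c on a final
  segment of W.
\<close>

lemma lepoll_iff_card_of_ordLeq: "A \<lesssim> B \<longleftrightarrow> (card_of A, card_of B) \<in> ordLeq"
  unfolding lepoll_def using card_of_ordLeq[of A B] by auto

lemma UN_lepoll_infinite:
  assumes "infinite K" "I \<lesssim> K" "\<And>i. i \<in> I \<Longrightarrow> A i \<lesssim> K"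
  shows "(\<Union>i\<in>I. A i) \<lesssim> K"
  using card_of_UNION_ordLeq_infinite[of K I A] assms by (simp add: lepoll_iff_card_of_ordLeq)

lemma Un_lepoll_infinite:
  assumes "infinite K" "A \<lesssim> K" "B \<lesssim> K"
  shows "A \<union> B \<lesssim> K"
  using UN_lepoll_infinite[of K "{A, B}" id] finite_lepoll_infinite[of K "{A, B}"] assms by auto

lemma insert_lepoll_infinite:
  assumes "infinite K" "A \<lesssim> K"
  shows "insert x A \<lesssim> K"
  using Un_lepoll_infinite[of K "{x}" A] finite_lepoll_infinite[of K "{x}"] assms by simp

lemma abs_le_supnorm:
  assumes "f \<in> linfty"
  shows "\<bar>f x\<bar> \<le> supnorm f"
proof -
  have "bdd_above (range (\<lambda>x. \<bar>f x\<bar>))"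
    using assms unfolding linfty_def bounded_iff bdd_above_def by auto
  then show ?thesis
    unfolding supnorm_def by (rule cSUP_upper[OF UNIV_I])
qed

lemma supnorm_le:
  assumes "\<And>x. \<bar>f x\<bar> \<le> d"
  shows "supnorm f \<le> d"
  unfolding supnorm_def using assms by (rule cSUP_least[OF UNIV_not_empty])

lemma linfty_diff:
  assumes "f \<in> linfty" "g \<in> linfty"
  shows "f - g \<in> linfty"
proof -
  obtain M N where M: "\<And>x. \<bar>f x\<bar> \<le> M" and N: "\<And>x. \<bar>g x\<bar> \<le> N"
    using assms unfolding linfty_def bounded_iff by auto
  have "\<bar>(f - g) x\<bar> \<le> M + N" for x
  proof -
    have "\<bar>(f - g) x\<bar> \<le> \<bar>f x\<bar> + \<bar>g x\<bar>"
      by (simp add: abs_triangle_ineq4)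
    also have "\<dots> \<le> M + N"
      using M N by (rule add_mono)
    finally show ?thesis .
  qed
  then show ?thesis
    unfolding linfty_def bounded_iff by auto
qed

lemma lepoll_imp_superset_eqpoll:
  fixes A :: "'a set" and K :: "'b set"
  assumes "infinite K" "K \<lesssim> (UNIV :: 'a set)" "A \<lesssim> K"
  obtains A' where "A \<subseteq> A'" "A' \<approx> K"
proof -
  obtain g :: "'b \<Rightarrow> 'a" where "inj_on g K"
    using assms(2) unfolding lepoll_def by blast
  then have "g ` K \<approx> K"
    by (rule inj_on_image_eqpoll_self)
  have "A \<union> g ` K \<approx> K"
  proof (rule lepoll_antisym)
    show "A \<union> g ` K \<lesssim> K"
      using Un_lepoll_infinite[OF assms(1,3) eqpoll_imp_lepoll[OF \<open>g ` K \<approx> K\<close>]] .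
    show "K \<lesssim> A \<union> g ` K"
      using lepoll_trans1[OF eqpoll_sym[OF \<open>g ` K \<approx> K\<close>] subset_imp_lepoll] by blast
  qed
  then show ?thesis
    using that by blast
qed

lemma mem_unit_ball_Xspace:
  fixes f :: "'a \<Rightarrow> real" and K :: "'b set"
  assumes "infinite K" "K \<lesssim> (UNIV :: 'a set)"
  shows "f \<in> unit_ball (Xspace K) \<longleftrightarrow>
    (\<forall>x. \<bar>f x\<bar> \<le> 1) \<and> (\<exists>A c. A \<lesssim> K \<and> (\<forall>x. x \<notin> A \<longrightarrow> f x = c))"
proof
  assume "f \<in> unit_ball (Xspace K)"
  then have "f \<in> linfty" "supnorm f \<le> 1" and "\<exists>A c. A \<approx> K \<and> (\<forall>x. x \<notin> A \<longrightarrow> f x = c)"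
    unfolding unit_ball_def Xspace_def by auto
  moreover have "\<bar>f x\<bar> \<le> 1" for x
    using abs_le_supnorm[OF \<open>f \<in> linfty\<close>] \<open>supnorm f \<le> 1\<close> by (rule order_trans)
  ultimately show "(\<forall>x. \<bar>f x\<bar> \<le> 1) \<and> (\<exists>A c. A \<lesssim> K \<and> (\<forall>x. x \<notin> A \<longrightarrow> f x = c))"
    by (blast dest: eqpoll_imp_lepoll)
next
  assume "(\<forall>x. \<bar>f x\<bar> \<le> 1) \<and> (\<exists>A c. A \<lesssim> K \<and> (\<forall>x. x \<notin> A \<longrightarrow> f x = c))"
  then obtain A c where bound: "\<And>x. \<bar>f x\<bar> \<le> 1" and "A \<lesssim> K" and const: "\<And>x. x \<notin> A \<Longrightarrow> f x = c"
    by blast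
  obtain A' where "A \<subseteq> A'" "A' \<approx> K"
    using lepoll_imp_superset_eqpoll[OF assms \<open>A \<lesssim> K\<close>] .
  moreover have "\<forall>x \<in> - A'. f x = c"
    using const \<open>A \<subseteq> A'\<close> by blast
  moreover have "f \<in> linfty"
    using bound unfolding linfty_def bounded_iff by auto
  ultimately have "f \<in> Xspace K"
    unfolding Xspace_def by blast
  moreover have "supnorm f \<le> 1"
    using bound by (rule supnorm_le)
  ultimately show "f \<in> unit_ball (Xspace K)"
    unfolding unit_ball_def by blast
qed

lemma nonexpansive_onI:
  assumes "S \<subseteq> linfty"
    and "\<And>f g d y. f \<in> S \<Longrightarrow> g \<in> S \<Longrightarrow> (\<And>x. \<bar>f x - g x\<bar> \<le> d) \<Longrightarrow> \<bar>T f y - T g y\<bar> \<le> d"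
  shows "nonexpansive_on S T"
  unfolding nonexpansive_on_def
proof (intro ballI)
  fix f g assume "f \<in> S" "g \<in> S"
  then have "\<bar>f x - g x\<bar> \<le> supnorm (f - g)" for x
    using abs_le_supnorm[OF linfty_diff] assms(1) by fastforce
  then show "supnorm (T f - T g) \<le> supnorm (f - g)"
    using assms(2)[OF \<open>f \<in> S\<close> \<open>g \<in> S\<close>] by (intro supnorm_le) simp
qed

lemma cSUP_le_cSUP_add:
  fixes u v :: "'i \<Rightarrow> real"
  assumes "I \<noteq> {}" "bdd_above (v ` I)" "\<And>i. i \<in> I \<Longrightarrow> u i \<le> v i + d"
  shows "(SUP i\<in>I. u i) \<le> (SUP i\<in>I. v i) + d"
proof (rule cSUP_least[OF assms(1)])
  fix i assume "i \<in> I"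
  then have "v i \<le> (SUP i\<in>I. v i)"
    using assms(2) by (rule cSUP_upper)
  then show "u i \<le> (SUP i\<in>I. v i) + d"
    using assms(3)[OF \<open>i \<in> I\<close>] by simp
qed

lemma abs_cSUP_diff_le:
  fixes u v :: "'i \<Rightarrow> real"
  assumes "I \<noteq> {}" "bdd_above (u ` I)" "bdd_above (v ` I)" "\<And>i. i \<in> I \<Longrightarrow> \<bar>u i - v i\<bar> \<le> d"
  shows "\<bar>(SUP i\<in>I. u i) - (SUP i\<in>I. v i)\<bar> \<le> d"
proof -
  have u_le: "u i \<le> v i + d" and v_le: "v i \<le> u i + d" if "i \<in> I" for i
    using assms(4)[OF that] by (simp_all add: abs_le_iff)
  have "(SUP i\<in>I. u i) \<le> (SUP i\<in>I. v i) + d"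
    using assms(1,3) u_le by (rule cSUP_le_cSUP_add)
  moreover have "(SUP i\<in>I. v i) \<le> (SUP i\<in>I. u i) + d"
    using assms(1,2) v_le by (rule cSUP_le_cSUP_add)
  ultimately show ?thesis
    by (simp add: abs_le_iff)
qed

lemma abs_cINF_diff_le:
  fixes u v :: "'i \<Rightarrow> real"
  assumes "I \<noteq> {}" "bdd_below (u ` I)" "bdd_below (v ` I)" "\<And>i. i \<in> I \<Longrightarrow> \<bar>u i - v i\<bar> \<le> d"
  shows "\<bar>(INF i\<in>I. u i) - (INF i\<in>I. v i)\<bar> \<le> d"
proof -
  have "\<bar>(SUP i\<in>I. - u i) - (SUP i\<in>I. - v i)\<bar> \<le> d"
    using assms by (intro abs_cSUP_diff_le) (auto simp: bdd_above_uminus_image abs_minus_commute)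
  then show ?thesis
    using assms by (simp add: uminus_cINF[symmetric] abs_minus_commute)
qed

locale strict_well_order =
  fixes less :: "'a \<Rightarrow> 'a \<Rightarrow> bool" (infix "\<sqsubset>" 50)
  assumes trans_less: "x \<sqsubset> y \<Longrightarrow> y \<sqsubset> z \<Longrightarrow> x \<sqsubset> z"
    and irrefl_less: "\<not> x \<sqsubset> x"
    and total_less: "x \<noteq> y \<Longrightarrow> x \<sqsubset> y \<or> y \<sqsubset> x"
    and wf_less: "wf {(x, y). x \<sqsubset> y}"
begin

definition below :: "'a \<Rightarrow> 'a set" where
  "below y = {x. x \<sqsubset> y}"

definition ico :: "'a \<Rightarrow> 'a \<Rightarrow> 'a set" where
  "ico b y = {d. \<not> d \<sqsubset> b \<and> d \<sqsubset> y}"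

definition left_limsup :: "('a \<Rightarrow> real) \<Rightarrow> 'a \<Rightarrow> real" where
  "left_limsup f y = (INF b\<in>below y. SUP d\<in>ico b y. f d)"

lemma below_mono: "x \<sqsubset> y \<Longrightarrow> below x \<subseteq> below y"
  unfolding below_def using trans_less by blast

lemma ico_nonempty: "b \<in> below y \<Longrightarrow> ico b y \<noteq> {}"
  unfolding below_def ico_def using irrefl_less by blast

lemma abs_left_limsup_le:
  assumes "below y \<noteq> {}" "\<And>x. \<bar>f x\<bar> \<le> M"
  shows "\<bar>left_limsup f y\<bar> \<le> M"
  unfolding left_limsup_def
  using assms by (auto intro!: cInf_abs_ge cSup_abs_le dest: ico_nonempty)

lemma abs_left_limsup_diff_le:
  assumes "below y \<noteq> {}" "\<And>x. \<bar>f x\<bar> \<le> M" "\<And>x. \<bar>g x\<bar> \<le> M" "\<And>x. \<bar>f x - g x\<bar> \<le> d"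
  shows "\<bar>left_limsup f y - left_limsup g y\<bar> \<le> d"
proof -
  have bdd: "bdd_above (h ` S)" if "\<And>x. \<bar>h x\<bar> \<le> M" for h :: "'a \<Rightarrow> real" and S
    using that by (intro bdd_aboveI2[where M = M]) (simp add: abs_le_iff)
  have bdd_SUP: "bdd_below ((\<lambda>b. SUP d\<in>ico b y. h d) ` below y)" if "\<And>x. \<bar>h x\<bar> \<le> M" for h
  proof (rule bdd_belowI2[where m = "- M"])
    fix b assume "b \<in> below y"
    then have "\<bar>SUP d\<in>ico b y. h d\<bar> \<le> M"
      using that by (auto intro!: cSup_abs_le dest: ico_nonempty)
    then show "- M \<le> (SUP d\<in>ico b y. h d)"
      by (simp add: abs_le_iff)
  qed
  show ?thesis
    unfolding left_limsup_def
    using assms bdd bdd_SUP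
    by (intro abs_cINF_diff_le abs_cSUP_diff_le) (auto dest: ico_nonempty)
qed

lemma left_limsup_in_finite:
  assumes "finite F" "below y \<noteq> {}" "\<And>d. d \<sqsubset> y \<Longrightarrow> f d \<in> F"
  shows "left_limsup f y \<in> F"
proof -
  have extrema_in: "Sup S \<in> F" "Inf S \<in> F" if "S \<subseteq> F" "S \<noteq> {}" for S :: "real set"
  proof -
    have "finite S"
      using that(1) assms(1) by (rule finite_subset)
    then have "Sup S \<in> S" "Inf S \<in> S"
      using that(2) by (simp_all add: cSup_eq_Max cInf_eq_Min Max_in Min_in)
    then show "Sup S \<in> F" "Inf S \<in> F"
      using that(1) by blast+
  qed
  have "(SUP d\<in>ico b y. f d) \<in> F" if "b \<in> below y" for b
  proof (rule extrema_in(1))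
    show "f ` ico b y \<subseteq> F"
      using assms(3) unfolding ico_def by blast
    show "f ` ico b y \<noteq> {}"
      using ico_nonempty[OF that] by blast
  qed
  then show ?thesis
    unfolding left_limsup_def using assms(2) by (intro extrema_in(2)) auto
qed

lemma left_limsup_eventually_const:
  assumes "x \<sqsubset> y" "bdd_above (range f)" "\<And>d. \<not> d \<sqsubset> x \<Longrightarrow> d \<sqsubset> y \<Longrightarrow> f d = c"
  shows "left_limsup f y = c"
  unfolding left_limsup_def
proof (rule cInf_eq_minimum)
  have "f ` ico x y = {c}"
    using assms(1,3) ico_nonempty[of x y] unfolding ico_def below_def by auto
  then show "c \<in> (\<lambda>b. SUP d\<in>ico b y. f d) ` below y"
    using assms(1) unfolding below_def by (metis (mono_tags) cSup_singleton image_eqI mem_Collect_eq)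
next
  fix s assume "s \<in> (\<lambda>b. SUP d\<in>ico b y. f d) ` below y"
  then obtain b where "b \<in> below y" and s: "s = (SUP d\<in>ico b y. f d)"
    by blast
  define m where "m = (if b \<sqsubset> x then x else b)"
  have "\<not> m \<sqsubset> x \<and> \<not> m \<sqsubset> b \<and> m \<sqsubset> y"
  proof (cases "b \<sqsubset> x")
    case True
    then show ?thesis
      using assms(1) irrefl_less trans_less[of x b x] unfolding m_def by auto
  next
    case False
    then show ?thesis
      using \<open>b \<in> below y\<close> irrefl_less unfolding m_def below_def by auto
  qed
  then have "m \<in> ico b y" "f m = c"
    using assms(3) unfolding ico_def by auto
  moreover have "bdd_above (f ` ico b y)"
    using assms(2) by (rule bdd_above_mono) blast
  ultimately have "f m \<le> s"
    unfolding s by (intro cSUP_upper)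
  then show "c \<le> s"
    using \<open>f m = c\<close> by simp
qed

end

locale kappa_plus_segment = strict_well_order +
  fixes K :: "'b set"
  assumes infinite_K: "infinite K"
    and K_lesspoll_UNIV: "K \<prec> (UNIV :: 'a set)"
begin

definition short_points :: "'a set" where
  "short_points = {x. below x \<lesssim> K}"

lemma UNIV_not_lepoll_K: "\<not> (UNIV :: 'a set) \<lesssim> K"
proof
  assume "(UNIV :: 'a set) \<lesssim> K"
  then have "K \<approx> (UNIV :: 'a set)"
    using lesspoll_imp_lepoll[OF K_lesspoll_UNIV] by (rule lepoll_antisym[rotated])
  then show False
    using K_lesspoll_UNIV unfolding lesspoll_def by blast
qed

lemma short_points_downward_closed: "x \<in> short_points \<Longrightarrow> y \<sqsubset> x \<Longrightarrow> y \<in> short_points"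
  unfolding short_points_def using below_mono lepoll_trans subset_imp_lepoll by blast

lemma not_short_points_lepoll: "\<not> short_points \<lesssim> K"
proof
  assume small: "short_points \<lesssim> K"
  then have "short_points \<noteq> UNIV"
    using UNIV_not_lepoll_K by metis
  then obtain v where "v \<notin> short_points"
    by blast
  then obtain w where "w \<notin> short_points" and minimal: "\<And>y. y \<sqsubset> w \<Longrightarrow> y \<in> short_points"
    using wfE_min[OF wf_less, of v "- short_points"] by auto
  then have "below w \<subseteq> short_points"
    unfolding below_def by blast
  then have "below w \<lesssim> K"
    using small by (blast intro: lepoll_trans subset_imp_lepoll)
  then show False
    using \<open>w \<notin> short_points\<close> unfolding short_points_def by blast
qed

lemma short_points_bounded:
  assumes "B \<subseteq> short_points" "B \<lesssim> K"
  obtains x where "x \<in> short_points" "\<And>b. b \<in> B \<Longrightarrow> b \<sqsubset> x"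
proof -
  have "B \<union> (\<Union>b\<in>B. below b) \<lesssim> K"
    using assms infinite_K unfolding short_points_def
    by (intro Un_lepoll_infinite UN_lepoll_infinite) auto
  then obtain x where "x \<in> short_points" "x \<notin> B \<union> (\<Union>b\<in>B. below b)"
    using not_short_points_lepoll by (meson lepoll_trans subsetI subset_imp_lepoll)
  then have "b \<sqsubset> x" if "b \<in> B" for b
    using that total_less[of x b] unfolding below_def by blast
  then show ?thesis
    using \<open>x \<in> short_points\<close> that by blast
qed

lemma short_points_unbounded:
  assumes "x \<in> short_points"
  obtains w where "w \<in> short_points" "x \<sqsubset> w"
proof -
  have "{x} \<subseteq> short_points"
    using assms by simp
  moreover have "{x} \<lesssim> K"
    using infinite_K by (rule finite_lepoll_infinite) simp
  ultimately obtain w where "w \<in> short_points" "\<And>b. b \<in> {x} \<Longrightarrow> b \<sqsubset> w"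
    by (rule short_points_bounded) blast
  then show ?thesis
    using that by blast
qed

definition neg_limsup_map :: "('a \<Rightarrow> real) \<Rightarrow> 'a \<Rightarrow> real" where
  "neg_limsup_map f y =
    (if y \<in> short_points then if below y = {} then 1 else - left_limsup f y else - f y)"

lemma abs_neg_limsup_map_le:
  assumes "\<And>x. \<bar>f x\<bar> \<le> 1"
  shows "\<bar>neg_limsup_map f y\<bar> \<le> 1"
  using assms abs_left_limsup_le[of y f 1] by (simp add: neg_limsup_map_def)

lemma abs_neg_limsup_map_diff_le:
  assumes "\<And>x. \<bar>f x\<bar> \<le> 1" "\<And>x. \<bar>g x\<bar> \<le> 1" "\<And>x. \<bar>f x - g x\<bar> \<le> d"
  shows "\<bar>neg_limsup_map f y - neg_limsup_map g y\<bar> \<le> d"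
proof -
  have "0 \<le> d"
    using abs_ge_zero assms(3) by (rule order_trans)
  then show ?thesis
    using assms abs_left_limsup_diff_le[of y f 1 g d]
    by (auto simp: neg_limsup_map_def abs_minus_commute)
qed

lemma neg_limsup_map_eq_on_tail:
  assumes const: "\<And>z. z \<notin> A \<Longrightarrow> f z = c" and bound: "\<And>z. \<bar>f z\<bar> \<le> 1"
    and above: "\<And>a. a \<in> A \<inter> short_points \<Longrightarrow> a \<sqsubset> x"
    and "x \<sqsubset> y" "y \<notin> A"
  shows "neg_limsup_map f y = - c"
proof (cases "y \<in> short_points")
  case True
  have "left_limsup f y = c"
  proof (rule left_limsup_eventually_const[OF \<open>x \<sqsubset> y\<close>])
    show "bdd_above (range f)"
      using bound by (intro bdd_aboveI2[where M = 1]) (simp add: abs_le_iff)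
    show "f d = c" if "\<not> d \<sqsubset> x" "d \<sqsubset> y" for d
      using that above short_points_downward_closed[OF True] const by blast
  qed
  moreover have "below y \<noteq> {}"
    using \<open>x \<sqsubset> y\<close> unfolding below_def by blast
  ultimately show ?thesis
    using True by (simp add: neg_limsup_map_def)
next
  case False
  then show ?thesis
    using const \<open>y \<notin> A\<close> by (simp add: neg_limsup_map_def)
qed

lemma fixed_point_of_neg_limsup_map_abs_eq_1:
  assumes "neg_limsup_map f = f"
  shows "y \<in> short_points \<Longrightarrow> \<bar>f y\<bar> = 1"
proof (induction y rule: wf_induct_rule[OF wf_less])
  case (1 y)
  show ?case
  proof (cases "below y = {}")
    case True
    have "f y = neg_limsup_map f y"
      using assms by simp
    also have "\<dots> = 1"
      using True "1.prems" by (simp add: neg_limsup_map_def)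
    finally show ?thesis
      by simp
  next
    case False
    have "f d \<in> {-1, 1}" if "d \<sqsubset> y" for d
      using "1.IH"[of d] that short_points_downward_closed[OF "1.prems" that] by fastforce
    then have "left_limsup f y \<in> {-1, 1}"
      using False by (intro left_limsup_in_finite) auto
    moreover have "f y = neg_limsup_map f y"
      using assms by simp
    then have "f y = - left_limsup f y"
      using "1.prems" False by (simp add: neg_limsup_map_def)
    ultimately show ?thesis
      by auto
  qed
qed

lemma K_lepoll_UNIV: "K \<lesssim> (UNIV :: 'a set)"
  using K_lesspoll_UNIV by (rule lesspoll_imp_lepoll)

lemmas mem_unit_ball = mem_unit_ball_Xspace[OF infinite_K K_lepoll_UNIV]

lemma unit_ball_exceptional_set:
  assumes "f \<in> unit_ball (Xspace K)"
  obtains A c x where "\<And>z. \<bar>f z\<bar> \<le> 1" "A \<lesssim> K" "\<And>z. z \<notin> A \<Longrightarrow> f z = c"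
    "x \<in> short_points" "\<And>a. a \<in> A \<inter> short_points \<Longrightarrow> a \<sqsubset> x"
proof -
  obtain A c where "\<And>z. \<bar>f z\<bar> \<le> 1" "A \<lesssim> K" "\<And>z. z \<notin> A \<Longrightarrow> f z = c"
    using assms unfolding mem_unit_ball by blast
  moreover have "A \<inter> short_points \<lesssim> K"
    using \<open>A \<lesssim> K\<close> by (rule lepoll_trans[OF subset_imp_lepoll[OF inf_le1]])
  then obtain x where "x \<in> short_points" "\<And>a. a \<in> A \<inter> short_points \<Longrightarrow> a \<sqsubset> x"
    by (rule short_points_bounded[OF inf_le2]) blast
  ultimately show ?thesis
    using that by blast
qed

lemma neg_limsup_map_unit_ball:
  assumes "f \<in> unit_ball (Xspace K)"
  shows "neg_limsup_map f \<in> unit_ball (Xspace K)"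
proof -
  obtain A c x where bound: "\<And>z. \<bar>f z\<bar> \<le> 1" and "A \<lesssim> K" and const: "\<And>z. z \<notin> A \<Longrightarrow> f z = c"
    and "x \<in> short_points" and above: "\<And>a. a \<in> A \<inter> short_points \<Longrightarrow> a \<sqsubset> x"
    using assms by (rule unit_ball_exceptional_set) blast
  show ?thesis
    unfolding mem_unit_ball
  proof (intro conjI exI allI impI)
    show "\<bar>neg_limsup_map f y\<bar> \<le> 1" for y
      using bound by (rule abs_neg_limsup_map_le)
    have "insert x (below x) \<lesssim> K"
      using \<open>x \<in> short_points\<close> infinite_K unfolding short_points_def
      by (intro insert_lepoll_infinite) simp_all
    then show "A \<union> insert x (below x) \<lesssim> K"
      using infinite_K \<open>A \<lesssim> K\<close> by (intro Un_lepoll_infinite)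
    fix y assume y: "y \<notin> A \<union> insert x (below x)"
    then have "x \<sqsubset> y"
      using total_less[of x y] unfolding below_def by auto
    then show "neg_limsup_map f y = - c"
      using y by (intro neg_limsup_map_eq_on_tail[where f = f and A = A and c = c, OF const bound above]) auto
  qed
qed

lemma nonexpansive_neg_limsup_map: "nonexpansive_on (unit_ball (Xspace K)) neg_limsup_map"
proof (rule nonexpansive_onI)
  show "unit_ball (Xspace K) \<subseteq> linfty"
    unfolding unit_ball_def Xspace_def by blast
next
  fix f g :: "'a \<Rightarrow> real" and d y
  assume "f \<in> unit_ball (Xspace K)" "g \<in> unit_ball (Xspace K)" and diff: "\<And>x. \<bar>f x - g x\<bar> \<le> d"
  then have "\<forall>x. \<bar>f x\<bar> \<le> 1" "\<forall>x. \<bar>g x\<bar> \<le> 1"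
    unfolding mem_unit_ball by blast+
  then show "\<bar>neg_limsup_map f y - neg_limsup_map g y\<bar> \<le> d"
    using diff by (intro abs_neg_limsup_map_diff_le) auto
qed

lemma neg_limsup_map_no_fixed_point:
  assumes "f \<in> unit_ball (Xspace K)"
  shows "neg_limsup_map f \<noteq> f"
proof
  assume fixed: "neg_limsup_map f = f"
  obtain A c x where bound: "\<And>z. \<bar>f z\<bar> \<le> 1" and "A \<lesssim> K" and const: "\<And>z. z \<notin> A \<Longrightarrow> f z = c"
    and "x \<in> short_points" and above: "\<And>a. a \<in> A \<inter> short_points \<Longrightarrow> a \<sqsubset> x"
    using assms by (rule unit_ball_exceptional_set) blast
  obtain w where "w \<in> short_points" "x \<sqsubset> w"
    using short_points_unbounded[OF \<open>x \<in> short_points\<close>] .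
  have "w \<notin> A"
  proof
    assume "w \<in> A"
    then have "w \<sqsubset> x"
      using above \<open>w \<in> short_points\<close> by blast
    then show False
      using trans_less[OF _ \<open>x \<sqsubset> w\<close>] irrefl_less by blast
  qed
  have "f w = c"
    using const[OF \<open>w \<notin> A\<close>] .
  moreover have "f w = - c"
    using neg_limsup_map_eq_on_tail[where f = f and A = A and c = c, OF const bound above \<open>x \<sqsubset> w\<close> \<open>w \<notin> A\<close>] fixed by simp
  ultimately have "f w = 0"
    by simp
  then show False
    using fixed_point_of_neg_limsup_map_abs_eq_1[OF fixed \<open>w \<in> short_points\<close>] by simp
qed

theorem not_ball_fpp_Xspace: "\<not> ball_fpp (Xspace K :: ('a \<Rightarrow> real) set)"
proof
  assume "ball_fpp (Xspace K :: ('a \<Rightarrow> real) set)"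
  moreover have "neg_limsup_map ` unit_ball (Xspace K) \<subseteq> unit_ball (Xspace K)"
    using neg_limsup_map_unit_ball by blast
  ultimately obtain f where "f \<in> unit_ball (Xspace K)" "neg_limsup_map f = f"
    using nonexpansive_neg_limsup_map unfolding ball_fpp_def by auto
  then show False
    using neg_limsup_map_no_fixed_point by blast
qed

end

lemma ex_strict_well_order: "\<exists>less :: 'a \<Rightarrow> 'a \<Rightarrow> bool. strict_well_order less"
proof -
  obtain r :: "'a rel" where "well_order_on UNIV r"
    using well_order_on by blast
  then have "trans r" "antisym r" "total_on UNIV r" "wf (r - Id)"
    unfolding well_order_on_def linear_order_on_def partial_order_on_def preorder_on_def by auto
  moreover have "{(x, y). (x, y) \<in> r - Id} = r - Id"
    by auto
  ultimately have "strict_well_order (\<lambda>x y. (x, y) \<in> r - Id)"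
    unfolding strict_well_order_def trans_def antisym_def total_on_def
    by (simp only:) blast
  then show ?thesis
    by blast
qed

theorem mainTheorem6:
  fixes K :: "'b set"
  assumes "infinite K"
    and "infinite (UNIV :: 'a set)"
    and "K \<prec> (UNIV :: 'a set)"
  shows "\<not> ball_fpp (Xspace K :: ('a \<Rightarrow> real) set)"
proof -
  obtain less :: "'a \<Rightarrow> 'a \<Rightarrow> bool" where "strict_well_order less"
    using ex_strict_well_order by blast
  then interpret kappa_plus_segment less K
    using assms(1,3) by (simp add: kappa_plus_segment_def kappa_plus_segment_axioms_def)
  show ?thesis
    by (rule not_ball_fpp_Xspace)
qed

end
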